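(* Let $G$ be a central product of finite groups $H$ and $K$. Then the $c$-dimension of $G$ is at least the sum of the $c$-dimensions of $H$ and $K$.
   Context: The $c$-dimension of a group $G$ is the maximal length $k$ of a chain of nested centralizers $C_G(Y_0)<C_G(Y_1)<\dots<C_G(Y_k)$ (strict inclusions) of subsets $Y_i\subseteq G$. A group $G$ is a central product of $H$ and $K$ if $G=HK$ where $H,K$ are subgroups of $G$ with $[H,K]=1$ (equivalently, $G$ is a quotient of $H\times K$ by a central subgroup intersecting $H$ and $K$ trivially, and $H,K$ are identified with their images). *)

theory Defs
  imports "HOL-Algebra.Algebra"
begin

definition centralizer :: "('a, 'b) monoid_scheme \<Rightarrow> 'a set \<Rightarrow> 'a set" where
  "centralizer G Y = {g \<in> carrier G. \<forall>y\<in>Y. g \<otimes>\<^bsub>G\<^esub> y = y \<otimes>\<^bsub>G\<^esub> g}"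

definition centralizer_chain :: "('a, 'b) monoid_scheme \<Rightarrow> nat \<Rightarrow> bool" where
  "centralizer_chain G k \<longleftrightarrow> (\<exists>Ys :: nat \<Rightarrow> 'a set.
      (\<forall>i\<le>k. Ys i \<subseteq> carrier G) \<and>
      (\<forall>i<k. centralizer G (Ys i) \<subset> centralizer G (Ys (Suc i))))"

text \<open>c-dimension: the maximal length of such a chain (meaningful for finite groups).\<close>
definition cdim :: "('a, 'b) monoid_scheme \<Rightarrow> nat" where
  "cdim G = Max {k. centralizer_chain G k}"

end

theory Submission
  imports Defs
begin

text \<open>If \<open>G = HK\<close> with \<open>[H,K] = 1\<close>, write \<open>g = hk\<close>. For \<open>A \<subseteq> H\<close> and \<open>B \<subseteq> K\<close>, the factor \<open>k\<close>
  centralizes \<open>A\<close> and \<open>h\<close> centralizes \<open>B\<close>, so \<open>g \<in> C\<^sub>G(A \<union> B)\<close> iff \<open>h \<in> C\<^sub>H(A)\<close> and \<open>k \<in> C\<^sub>K(B)\<close>.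
  Hence a strictly increasing chain \<open>C\<^sub>H(A\<^sub>i)\<close> of length \<open>m\<close> and one \<open>C\<^sub>K(B\<^sub>j)\<close> of length \<open>n\<close>
  concatenate to the chain \<open>C\<^sub>G(A\<^sub>0 \<union> B\<^sub>0) < \<dots> < C\<^sub>G(A\<^sub>m \<union> B\<^sub>0) < \<dots> < C\<^sub>G(A\<^sub>m \<union> B\<^sub>n)\<close>
  of length \<open>m + n\<close> in \<open>G\<close>.\<close>

lemma centralizer_subset_carrier: "centralizer G Y \<subseteq> carrier G"
  unfolding centralizer_def by blast

lemma centralizer_union: "centralizer G (A \<union> B) = centralizer G A \<inter> centralizer G B"
  unfolding centralizer_def by blast

lemma centralizer_subgroup_carrier:
  assumes "H \<subseteq> carrier G"
  shows "centralizer (G\<lparr>carrier := H\<rparr>) Y = H \<inter> centralizer G Y"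
  using assms unfolding centralizer_def by auto

lemma centralizer_if_commute:
  assumes "x \<in> carrier G" "\<forall>y\<in>Y. x \<otimes>\<^bsub>G\<^esub> y = y \<otimes>\<^bsub>G\<^esub> x"
  shows "x \<in> centralizer G Y"
  using assms unfolding centralizer_def by blast

lemma (in group) mult_mem_centralizer_iff:
  assumes "h \<in> carrier G" "k \<in> centralizer G A" "A \<subseteq> carrier G"
  shows "h \<otimes> k \<in> centralizer G A \<longleftrightarrow> h \<in> centralizer G A"
proof -
  have k: "k \<in> carrier G" "\<forall>a\<in>A. k \<otimes> a = a \<otimes> k"
    using assms(2) unfolding centralizer_def by auto
  have "h \<otimes> k \<otimes> a = a \<otimes> (h \<otimes> k) \<longleftrightarrow> h \<otimes> a = a \<otimes> h" if "a \<in> A" for a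
  proof -
    have a: "a \<in> carrier G" using that assms(3) by blast
    have "h \<otimes> k \<otimes> a = h \<otimes> a \<otimes> k" and "a \<otimes> (h \<otimes> k) = a \<otimes> h \<otimes> k"
      using assms(1) k a that by (simp_all add: m_assoc)
    then show ?thesis using assms(1) k(1) a by simp
  qed
  then show ?thesis using assms(1) k(1) unfolding centralizer_def by auto
qed

lemma set_mult_commute_elements:
  assumes "\<forall>h\<in>H. \<forall>k\<in>K. h \<otimes>\<^bsub>G\<^esub> k = k \<otimes>\<^bsub>G\<^esub> h"
  shows "H <#>\<^bsub>G\<^esub> K = K <#>\<^bsub>G\<^esub> H"
  using assms unfolding set_mult_def by fastforce

lemma finite_set_mult:
  assumes "finite H" "finite K"
  shows "finite (H <#>\<^bsub>G\<^esub> K)"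
  using assms unfolding set_mult_def by blast

lemma (in group) central_product_centralizer_psubset:
  assumes H: "subgroup H G" and K: "subgroup K G" and HK: "H <#> K = carrier G"
    and commute: "\<forall>h\<in>H. \<forall>k\<in>K. h \<otimes> k = k \<otimes> h"
    and A: "A \<subseteq> H" "A' \<subseteq> H" and B: "B \<subseteq> K"
    and psubset: "centralizer (G\<lparr>carrier := H\<rparr>) A \<subset> centralizer (G\<lparr>carrier := H\<rparr>) A'"
  shows "centralizer G (A \<union> B) \<subset> centralizer G (A' \<union> B)"
proof -
  have Hc: "H \<subseteq> carrier G" and Kc: "K \<subseteq> carrier G"
    using H K subgroup.subset by blast+
  have K_centralizes: "K \<subseteq> centralizer G Y" if "Y \<subseteq> H" for Y
    using that commute Kc by (auto intro!: centralizer_if_commute)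
  have H_centralizes_B: "H \<subseteq> centralizer G B"
    using B commute Hc by (auto intro!: centralizer_if_commute)
  from psubset have CH: "H \<inter> centralizer G A \<subset> H \<inter> centralizer G A'"
    by (simp add: centralizer_subgroup_carrier[OF Hc])
  have "centralizer G A \<inter> centralizer G B \<subseteq> centralizer G A'"
  proof
    fix g assume g: "g \<in> centralizer G A \<inter> centralizer G B"
    then have "g \<in> carrier G" using centralizer_subset_carrier by fast
    then have "g \<in> H <#> K" using HK by simp
    then obtain h k where h: "h \<in> H" and k: "k \<in> K" and g_eq: "g = h \<otimes> k"
      unfolding set_mult_def by blast
    have h_carrier: "h \<in> carrier G" using h Hc by blast
    have k_centralizes_A: "k \<in> centralizer G A" "k \<in> centralizer G A'"
      using K_centralizes A k by blast+
    have "h \<in> centralizer G A"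
      using g g_eq mult_mem_centralizer_iff[OF h_carrier k_centralizes_A(1)] A Hc by auto
    with h CH have "h \<in> centralizer G A'" by blast
    then show "g \<in> centralizer G A'"
      using g_eq mult_mem_centralizer_iff[OF h_carrier k_centralizes_A(2)] A Hc by auto
  qed
  then have "centralizer G (A \<union> B) \<subseteq> centralizer G (A' \<union> B)"
    by (auto simp: centralizer_union)
  moreover obtain h where "h \<in> H" "h \<in> centralizer G A'" "h \<notin> centralizer G A"
    using CH by blast
  then have "h \<in> centralizer G (A' \<union> B)" "h \<notin> centralizer G (A \<union> B)"
    using H_centralizes_B by (auto simp: centralizer_union)
  ultimately show ?thesis by blast
qed

lemma centralizer_chain_length_le_card:
  assumes fin: "finite (carrier G)" and chain: "centralizer_chain G k"
  shows "k \<le> card (carrier G)"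
proof -
  obtain Ys where lt: "\<forall>i<k. centralizer G (Ys i) \<subset> centralizer G (Ys (Suc i))"
    using chain unfolding centralizer_chain_def by blast
  have finite_C: "finite (centralizer G Y)" for Y
    using centralizer_subset_carrier fin by (rule finite_subset)
  have "j \<le> card (centralizer G (Ys j))" if "j \<le> k" for j
    using that
  proof (induction j)
    case (Suc j)
    then have "centralizer G (Ys j) \<subset> centralizer G (Ys (Suc j))"
      using lt by simp
    then have "card (centralizer G (Ys j)) < card (centralizer G (Ys (Suc j)))"
      using finite_C by (rule psubset_card_mono[rotated])
    with Suc show ?case by simp
  qed simp
  then have "k \<le> card (centralizer G (Ys k))" by simp
  also have "\<dots> \<le> card (carrier G)"
    using fin centralizer_subset_carrier by (rule card_mono)
  finally show ?thesis .
qed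

lemma
  assumes "finite (carrier G)"
  shows centralizer_chain_cdim: "centralizer_chain G (cdim G)"
    and centralizer_chain_le_cdim: "centralizer_chain G k \<Longrightarrow> k \<le> cdim G"
proof -
  have "{k. centralizer_chain G k} \<subseteq> {..card (carrier G)}"
    using centralizer_chain_length_le_card[OF assms] by auto
  then have finite: "finite {k. centralizer_chain G k}"
    by (rule finite_subset) simp
  have "centralizer_chain G 0"
    unfolding centralizer_chain_def by (rule exI[of _ "\<lambda>_. {}"]) simp
  then have "{k. centralizer_chain G k} \<noteq> {}" by blast
  then show "centralizer_chain G (cdim G)"
    unfolding cdim_def using Max_in[OF finite] by simp
  show "centralizer_chain G k \<Longrightarrow> k \<le> cdim G"
    unfolding cdim_def using Max_ge[OF finite] by simp
qed

lemma (in group) central_product_centralizer_chain: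
  assumes H: "subgroup H G" and K: "subgroup K G" and HK: "H <#> K = carrier G"
    and commute: "\<forall>h\<in>H. \<forall>k\<in>K. h \<otimes> k = k \<otimes> h"
    and chain_H: "centralizer_chain (G\<lparr>carrier := H\<rparr>) m"
    and chain_K: "centralizer_chain (G\<lparr>carrier := K\<rparr>) n"
  shows "centralizer_chain G (m + n)"
proof -
  obtain A where A_sub: "\<forall>i\<le>m. A i \<subseteq> H"
    and A_lt: "\<forall>i<m. centralizer (G\<lparr>carrier := H\<rparr>) (A i) \<subset> centralizer (G\<lparr>carrier := H\<rparr>) (A (Suc i))"
    using chain_H unfolding centralizer_chain_def by auto
  obtain B where B_sub: "\<forall>j\<le>n. B j \<subseteq> K"
    and B_lt: "\<forall>j<n. centralizer (G\<lparr>carrier := K\<rparr>) (B j) \<subset> centralizer (G\<lparr>carrier := K\<rparr>) (B (Suc j))"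
    using chain_K unfolding centralizer_chain_def by auto
  have KH: "K <#> H = carrier G"
    using HK commute set_mult_commute_elements by metis
  have commute': "\<forall>k\<in>K. \<forall>h\<in>H. k \<otimes> h = h \<otimes> k"
    using commute by metis
  define Y where "Y i = A (min i m) \<union> B (i - m)" for i
  have "Y i \<subseteq> carrier G" if "i \<le> m + n" for i
  proof -
    have "A (min i m) \<subseteq> H" "B (i - m) \<subseteq> K"
      using that A_sub B_sub by auto
    then show ?thesis
      using subgroup.subset[OF H] subgroup.subset[OF K] unfolding Y_def by blast
  qed
  moreover have "centralizer G (Y i) \<subset> centralizer G (Y (Suc i))" if i: "i < m + n" for i
  proof (cases "i < m")
    case True
    then have "Y i = A i \<union> B 0" "Y (Suc i) = A (Suc i) \<union> B 0"
      unfolding Y_def by auto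
    then show ?thesis
      using central_product_centralizer_psubset[OF H K HK commute] True A_sub A_lt B_sub by simp
  next
    case False
    then have "Y i = B (i - m) \<union> A m" "Y (Suc i) = B (Suc (i - m)) \<union> A m"
      unfolding Y_def by (auto simp: Suc_diff_le)
    then show ?thesis
      using central_product_centralizer_psubset[OF K H KH commute'] False i A_sub B_sub B_lt
      by simp
  qed
  ultimately show ?thesis
    unfolding centralizer_chain_def by blast
qed

theorem lemma4:
  fixes G :: "('a, 'b) monoid_scheme" and H K :: "'a set"
  assumes "group G"
    and "subgroup H G" and "subgroup K G"
    and "finite H" and "finite K"
    and "H <#>\<^bsub>G\<^esub> K = carrier G"
    and "\<forall>h\<in>H. \<forall>k\<in>K. h \<otimes>\<^bsub>G\<^esub> k = k \<otimes>\<^bsub>G\<^esub> h"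
  shows "cdim (G\<lparr>carrier := H\<rparr>) + cdim (G\<lparr>carrier := K\<rparr>) \<le> cdim G"
proof -
  have "finite (carrier G)"
    using assms(4-6) finite_set_mult by metis
  moreover have "centralizer_chain G (cdim (G\<lparr>carrier := H\<rparr>) + cdim (G\<lparr>carrier := K\<rparr>))"
    using group.central_product_centralizer_chain[OF assms(1-3,6,7)]
      centralizer_chain_cdim[of "G\<lparr>carrier := H\<rparr>"] centralizer_chain_cdim[of "G\<lparr>carrier := K\<rparr>"]
      assms(4,5) by simp
  ultimately show ?thesis
    by (rule centralizer_chain_le_cdim)
qed

end
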